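(* Let $\mathcal C$ be a class of colorings that has the refinement property. Then for every hypergraph $H$ with $n\ge1$ vertices, $\mathrm{ch}_{\mathcal C}(H)\le\chi_{\mathcal C}(H)\cdot\ln n+1$.
   Context: A class of colorings $\mathcal C$ specifies, for each hypergraph $H=(V,\mathcal E)$, a set of colorings $V\to\mathbb Z_{>0}$ called $\mathcal C$-colorings of $H$. A coloring $C'$ is a refinement of a coloring $C$ if $C(x)\ne C(y)$ implies $C'(x)\ne C'(y)$. $\mathcal C$ has the refinement property if every refinement of a $\mathcal C$-coloring of $H$ is also a $\mathcal C$-coloring of $H$. $\chi_{\mathcal C}(H)$ is the minimum number of colors used by a $\mathcal C$-coloring of $H$ (assumed to exist). $\mathrm{ch}_{\mathcal C}(H)$ is the minimum $k$ such that for every family $\{L_v\}_{v\in V}$ of sets of positive integers with $|L_v|\ge k$, there is a $\mathcal C$-coloring $C$ of $H$ with $C(v)\in L_v$ for all $v$. *)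

theory Defs
  imports Complex_Main
begin

text \<open>A class of colorings is modelled as a predicate Cls V E c saying that c is a member of the
class for the hypergraph (V, E); only the values of c on V matter.\<close>

definition hypergraph :: "'a set \<Rightarrow> 'a set set \<Rightarrow> bool" where
  "hypergraph V E \<longleftrightarrow> E \<subseteq> Pow V"

definition is_coloring :: "'a set \<Rightarrow> ('a \<Rightarrow> nat) \<Rightarrow> bool" where
  "is_coloring V c \<longleftrightarrow> (\<forall>v\<in>V. 0 < c v)"

definition class_coloring ::
  "('a set \<Rightarrow> 'a set set \<Rightarrow> ('a \<Rightarrow> nat) \<Rightarrow> bool) \<Rightarrow> 'a set \<Rightarrow> 'a set set \<Rightarrow> ('a \<Rightarrow> nat) \<Rightarrow> bool" where
  "class_coloring Cls V E c \<longleftrightarrow> is_coloring V c \<and> Cls V E c"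

definition refinement :: "'a set \<Rightarrow> ('a \<Rightarrow> nat) \<Rightarrow> ('a \<Rightarrow> nat) \<Rightarrow> bool" where
  "refinement V c' c \<longleftrightarrow> (\<forall>x\<in>V. \<forall>y\<in>V. c x \<noteq> c y \<longrightarrow> c' x \<noteq> c' y)"

definition refinement_property ::
  "('a set \<Rightarrow> 'a set set \<Rightarrow> ('a \<Rightarrow> nat) \<Rightarrow> bool) \<Rightarrow> bool" where
  "refinement_property Cls \<longleftrightarrow>
     (\<forall>V E c c'. hypergraph V E \<and> class_coloring Cls V E c \<and> is_coloring V c'
        \<and> refinement V c' c \<longrightarrow> class_coloring Cls V E c')"

definition chi_class ::
  "('a set \<Rightarrow> 'a set set \<Rightarrow> ('a \<Rightarrow> nat) \<Rightarrow> bool) \<Rightarrow> 'a set \<Rightarrow> 'a set set \<Rightarrow> nat" where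
  "chi_class Cls V E = (LEAST k. \<exists>c. class_coloring Cls V E c \<and> card (c ` V) = k)"

definition ch_class ::
  "('a set \<Rightarrow> 'a set set \<Rightarrow> ('a \<Rightarrow> nat) \<Rightarrow> bool) \<Rightarrow> 'a set \<Rightarrow> 'a set set \<Rightarrow> nat" where
  "ch_class Cls V E = (LEAST k. \<forall>L :: 'a \<Rightarrow> nat set.
      (\<forall>v\<in>V. 0 \<notin> L v \<and> (infinite (L v) \<or> k \<le> card (L v))) \<longrightarrow>
      (\<exists>c. class_coloring Cls V E c \<and> (\<forall>v\<in>V. c v \<in> L v)))"

end

theory Submission
  imports Defs "HOL-Library.FuncSet"
begin

(* Proof idea (a counting version of the classical random-coloring argument).
   Fix a C-coloring c0 of H with k = chi_C(H) colors, palette S = c0 ` V, and let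
   t = floor (k ln n) + 1. Given lists L v of size at least t, shrink them to lists of
   size exactly t inside a finite universe U. Among the k^|U| maps f : U -> S, for a
   fixed vertex v at most (k-1)^t k^(|U|-t) "miss" v, i.e. avoid the color c0 v on all of
   L v. Since n (k-1)^t < k^t by the choice of t, some f misses no vertex. Choosing for
   each v an element c v of L v with f (c v) = c0 v gives f o c = c0 on V, so c refines
   c0 and is a C-coloring by the refinement property. Hence ch_C(H) <= t.
   The file first proves the numerical estimate and the counting lemma
   (exists_hitting_map), then the facts linking them to chi_class, ch_class and
   refinements, and finally assembles the theorem. *)

text \<open>The numerical heart of the argument: if \<open>t > k ln n\<close> then \<open>n (k-1)^t < k^t\<close>,
  because \<open>(1 - 1/k)^t \<le> exp (-t/k) < 1/n\<close>.\<close>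

lemma power_count_bound:
  fixes k t n :: nat
  assumes k: "k \<ge> 1" and n: "n \<ge> 1" and t: "real t > real k * ln (real n)"
  shows "n * (k - 1) ^ t < k ^ t"
proof -
  have kpos: "real k > 0" using k by simp
  have "(real k - 1) / real k = 1 + (- 1 / real k)" using kpos by (simp add: field_simps)
  also have "\<dots> \<le> exp (- 1 / real k)" by (rule exp_ge_add_one_self)
  finally have base: "(real k - 1) / real k \<le> exp (- 1 / real k)" .
  have "((real k - 1) / real k) ^ t \<le> exp (- 1 / real k) ^ t"
    by (rule power_mono[OF base]) (use k in simp)
  also have "\<dots> = exp (real t * (- 1 / real k))" by (rule exp_of_nat_mult[symmetric])
  also have "\<dots> < exp (- ln (real n))"
    using t kpos by (simp add: field_simps)
  also have "\<dots> = 1 / real n" using n by (simp add: exp_minus inverse_eq_divide)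
  finally have "real n * ((real k - 1) / real k) ^ t < 1" using n by (simp add: field_simps)
  hence "real n * (real k - 1) ^ t < real k ^ t" using kpos
    by (simp add: power_divide field_simps)
  hence "real (n * (k - 1) ^ t) < real (k ^ t)" using k by (simp add: of_nat_diff)
  thus ?thesis by linarith
qed

lemma card_PiE_avoiding:
  assumes "finite U" "A \<subseteq> U" "finite S" "s \<in> S"
  shows "card (PiE U (\<lambda>x. if x \<in> A then S - {s} else S))
           = (card S - 1) ^ card A * card S ^ (card U - card A)"
proof -
  have "card (PiE U (\<lambda>x. if x \<in> A then S - {s} else S))
          = (\<Prod>x\<in>U. card (if x \<in> A then S - {s} else S))"
    using assms by (simp add: card_PiE)
  also have "\<dots> = (\<Prod>x\<in>U. if x \<in> A then card S - 1 else card S)"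
    using assms by (intro prod.cong) auto
  also have "\<dots> = (\<Prod>x\<in>U \<inter> {x. x \<in> A}. card S - 1) * (\<Prod>x\<in>U \<inter> - {x. x \<in> A}. card S)"
    by (rule prod.If_cases[OF \<open>finite U\<close>])
  also have "U \<inter> {x. x \<in> A} = A" using \<open>A \<subseteq> U\<close> by blast
  also have "U \<inter> - {x. x \<in> A} = U - A" by blast
  finally show ?thesis using assms by (simp add: card_Diff_subset finite_subset)
qed

text \<open>The maps \<open>U \<rightarrow> S\<close> failing for \<open>v\<close> are too
  few to cover all \<open>|S|^|U|\<close> maps.\<close>

lemma exists_hitting_map:
  assumes finV: "finite V" and finU: "finite U" and finS: "finite S"
    and L: "\<And>v. v \<in> V \<Longrightarrow> L v \<subseteq> U \<and> card (L v) = t"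
    and target: "\<And>v. v \<in> V \<Longrightarrow> target v \<in> S"
    and few: "card V * (card S - 1) ^ t < card S ^ t"
  shows "\<exists>f. \<forall>v\<in>V. \<exists>x\<in>L v. f x = target v"
proof (cases "V = {}")
  case False
  then obtain v0 where "v0 \<in> V" by blast
  have tU: "t \<le> card U" using L[OF \<open>v0 \<in> V\<close>] finU by (metis card_mono)
  define k where "k = card S"
  have "k > 0" using target[OF \<open>v0 \<in> V\<close>] finS unfolding k_def by (auto simp: card_gt_0_iff)
  define F where "F = PiE U (\<lambda>_. S)"
  define miss where "miss v = PiE U (\<lambda>x. if x \<in> L v then S - {target v} else S)" for v
  have card_miss: "card (miss v) = (k - 1) ^ t * k ^ (card U - t)" if "v \<in> V" for v
    unfolding miss_def k_def using card_PiE_avoiding[OF finU _ finS target] L that by simp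
  have "card (\<Union>v\<in>V. miss v) \<le> (\<Sum>v\<in>V. card (miss v))" by (rule card_UN_le[OF finV])
  also have "\<dots> = (card V * (k - 1) ^ t) * k ^ (card U - t)" using card_miss by simp
  also have "\<dots> < k ^ t * k ^ (card U - t)"
    using few \<open>k > 0\<close> unfolding k_def by (intro mult_strict_right_mono) simp_all
  also have "\<dots> = card F" unfolding F_def k_def
    using tU finU by (simp add: card_PiE power_add[symmetric])
  finally have "card (\<Union>v\<in>V. miss v) < card F" .
  moreover have "finite (\<Union>v\<in>V. miss v)"
    unfolding miss_def using finV finU finS by (auto intro!: finite_PiE)
  ultimately have "\<not> F \<subseteq> (\<Union>v\<in>V. miss v)" by (meson card_mono not_le)
  then obtain f where "f \<in> F" and not_miss: "\<And>v. v \<in> V \<Longrightarrow> f \<notin> miss v" by blast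
  have "\<exists>x\<in>L v. f x = target v" if "v \<in> V" for v
  proof (rule ccontr)
    assume "\<not> ?thesis"
    hence "f \<in> miss v" using \<open>f \<in> F\<close> L[OF that] unfolding F_def miss_def by (auto simp: PiE_iff)
    thus False using not_miss[OF that] by blast
  qed
  thus ?thesis by blast
qed simp

lemma refinement_if_factors:
  assumes "\<And>v. v \<in> V \<Longrightarrow> f (c' v) = c v"
  shows "refinement V c' c"
  unfolding refinement_def using assms by metis

lemma chi_class_attained:
  assumes "\<exists>c. class_coloring Cls V E c"
  obtains c where "class_coloring Cls V E c" "card (c ` V) = chi_class Cls V E"
proof -
  have "\<exists>c. class_coloring Cls V E c \<and> card (c ` V) = chi_class Cls V E"
    unfolding chi_class_def
    by (rule LeastI_ex[where P = "\<lambda>k. \<exists>c. class_coloring Cls V E c \<and> card (c ` V) = k"])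
      (use assms in blast)
  thus thesis using that by blast
qed

lemma shrink_lists:
  assumes "\<forall>v\<in>V. infinite (L v) \<or> t \<le> card (L v)"
  obtains L' where "\<And>v. v \<in> V \<Longrightarrow> L' v \<subseteq> L v \<and> finite (L' v) \<and> card (L' v) = t"
proof -
  have "\<exists>B. B \<subseteq> L v \<and> finite B \<and> card B = t" if "v \<in> V" for v
    using assms that infinite_arbitrarily_large obtain_subset_with_card_n by metis
  thus thesis using that by metis
qed

lemma list_coloring_from_coloring:
  assumes refine: "refinement_property Cls" and H: "hypergraph V E" and finV: "finite V"
    and c0: "class_coloring Cls V E c0"
    and few: "card V * (card (c0 ` V) - 1) ^ t < card (c0 ` V) ^ t"
    and L: "\<forall>v\<in>V. 0 \<notin> L v \<and> (infinite (L v) \<or> t \<le> card (L v))"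
  shows "\<exists>c. class_coloring Cls V E c \<and> (\<forall>v\<in>V. c v \<in> L v)"
proof -
  obtain L' where L': "\<And>v. v \<in> V \<Longrightarrow> L' v \<subseteq> L v \<and> finite (L' v) \<and> card (L' v) = t"
    using shrink_lists L by metis
  define U where "U = (\<Union>v\<in>V. L' v)"
  have finU: "finite U" unfolding U_def using finV L' by auto
  have L'_in_U: "\<And>v. v \<in> V \<Longrightarrow> L' v \<subseteq> U \<and> card (L' v) = t" unfolding U_def using L' by blast
  have "\<exists>f. \<forall>v\<in>V. \<exists>x\<in>L' v. f x = c0 v"
    by (rule exists_hitting_map[where target = c0, OF finV finU _ L'_in_U _ few]) (simp_all add: finV)
  then obtain f where hit: "\<forall>v\<in>V. \<exists>x\<in>L' v. f x = c0 v" ..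
  then obtain c where c: "\<And>v. v \<in> V \<Longrightarrow> c v \<in> L' v \<and> f (c v) = c0 v" by metis
  have in_lists: "\<forall>v\<in>V. c v \<in> L v" using c L' by blast
  have "is_coloring V c" unfolding is_coloring_def using in_lists L by (metis gr0I)
  moreover have "refinement V c c0" using c by (intro refinement_if_factors[where f = f]) blast
  ultimately have "class_coloring Cls V E c"
    using refine H c0 unfolding refinement_property_def by blast
  thus ?thesis using in_lists by blast
qed

theorem theorem6p2:
  fixes Cls :: "'a set \<Rightarrow> 'a set set \<Rightarrow> ('a \<Rightarrow> nat) \<Rightarrow> bool"
    and V :: "'a set" and E :: "'a set set" and n :: nat
  assumes "refinement_property Cls"
    and "hypergraph V E" and "finite V" and "card V = n" and "n \<ge> 1"
    and "\<exists>c. class_coloring Cls V E c"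
  shows "real (ch_class Cls V E) \<le> real (chi_class Cls V E) * ln (real n) + 1"
proof -
  define k where "k = chi_class Cls V E"
  obtain c0 where c0: "class_coloring Cls V E c0" and card_c0: "card (c0 ` V) = k"
    using chi_class_attained[OF assms(6)] unfolding k_def by metis
  have "V \<noteq> {}" using assms(4,5) by auto
  hence "k \<ge> 1" using card_c0 assms(3) by (simp add: Suc_le_eq card_gt_0_iff flip: card_c0)
  have ln_nonneg: "ln (real n) \<ge> 0" using assms(5) by simp
  define t where "t = nat \<lfloor>real k * ln (real n)\<rfloor> + 1"
  have t_above: "real t > real k * ln (real n)" and t_below: "real t \<le> real k * ln (real n) + 1"
    unfolding t_def using ln_nonneg by (simp_all add: of_nat_nat) linarith
  have few: "card V * (card (c0 ` V) - 1) ^ t < card (c0 ` V) ^ t"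
    using power_count_bound[OF \<open>k \<ge> 1\<close> assms(5) t_above] card_c0 assms(4) by simp
  have "ch_class Cls V E \<le> t"
    unfolding ch_class_def
    by (rule Least_le) (use list_coloring_from_coloring[OF assms(1-3) c0 few] in blast)
  thus ?thesis using t_below unfolding k_def by simp
qed

end
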